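(* Let $\lambda=2\cos(\pi/5)$, let $p$ be a rational prime and $n$ a positive integer. Then the images in $SL(2,\mathbb Z[\lambda]/p^{n+1}\mathbb Z[\lambda])$ of the matrices $$\begin{pmatrix}1&p^n\lambda^i\\0&1\end{pmatrix},\quad \begin{pmatrix}1&0\\-p^n\lambda^i&1\end{pmatrix},\quad \begin{pmatrix}1-p^n\lambda^{i+1}&p^n\lambda^{i+2}\\-p^n\lambda^i&1+p^n\lambda^{i+1}\end{pmatrix},\qquad i=0,1,$$ generate a group of order $p^6$.
   Context: $\lambda=2\cos(\pi/5)$ satisfies $\lambda^2=\lambda+1$; entries are reduced modulo the ideal $p^{n+1}\mathbb Z[\lambda]$. *)

theory Defs
  imports Complex_Main "HOL-Computational_Algebra.Primes" "HOL-Algebra.Generated_Groups"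
begin

text \<open>The ring Z[lambda], lambda = 2 cos(pi/5), lambda^2 = lambda + 1.
  Since lambda is an irrational quadratic integer, Z[lambda] is free over Z with basis 1, lambda;
  an element a + b*lambda is represented by the pair (a, b).\<close>

type_synonym zl = "int \<times> int"

definition zl_val :: "zl \<Rightarrow> real" where
  "zl_val x = of_int (fst x) + of_int (snd x) * (2 * cos (pi / 5))"

definition zl_lam :: zl where "zl_lam = (0, 1)"
definition zl_one :: zl where "zl_one = (1, 0)"
definition zl_zero :: zl where "zl_zero = (0, 0)"

fun zl_add :: "zl \<Rightarrow> zl \<Rightarrow> zl" where
  "zl_add (a, b) (c, d) = (a + c, b + d)"

fun zl_neg :: "zl \<Rightarrow> zl" where
  "zl_neg (a, b) = (- a, - b)"

text \<open>(a + b lambda)(c + d lambda) = ac + (ad + bc) lambda + bd (lambda + 1)\<close>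
fun zl_mul :: "zl \<Rightarrow> zl \<Rightarrow> zl" where
  "zl_mul (a, b) (c, d) = (a * c + b * d, a * d + b * c + b * d)"

fun zl_smul :: "int \<Rightarrow> zl \<Rightarrow> zl" where
  "zl_smul k (a, b) = (k * a, k * b)"

primrec zl_pow :: "zl \<Rightarrow> nat \<Rightarrow> zl" where
  "zl_pow x 0 = zl_one"
| "zl_pow x (Suc i) = zl_mul x (zl_pow x i)"

text \<open>Reduction modulo the ideal m Z[lambda] = m Z + m Z lambda: canonical representative.\<close>
fun zl_red :: "int \<Rightarrow> zl \<Rightarrow> zl" where
  "zl_red m (a, b) = (a mod m, b mod m)"

text \<open>2x2 matrices (a, b, c, d) = [[a, b], [c, d]] over Z[lambda].\<close>
type_synonym mat2 = "zl \<times> zl \<times> zl \<times> zl"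

fun mat_mul :: "mat2 \<Rightarrow> mat2 \<Rightarrow> mat2" where
  "mat_mul (a, b, c, d) (e, f, g, h) =
     (zl_add (zl_mul a e) (zl_mul b g), zl_add (zl_mul a f) (zl_mul b h),
      zl_add (zl_mul c e) (zl_mul d g), zl_add (zl_mul c f) (zl_mul d h))"

fun mat_det :: "mat2 \<Rightarrow> zl" where
  "mat_det (a, b, c, d) = zl_add (zl_mul a d) (zl_neg (zl_mul b c))"

fun mat_red :: "int \<Rightarrow> mat2 \<Rightarrow> mat2" where
  "mat_red m (a, b, c, d) = (zl_red m a, zl_red m b, zl_red m c, zl_red m d)"

definition mat_id :: mat2 where
  "mat_id = (zl_one, zl_zero, zl_zero, zl_one)"

text \<open>SL(2, Z[lambda] / m Z[lambda]), elements given by their canonical representatives.\<close>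
definition SL2_quot :: "int \<Rightarrow> mat2 monoid" where
  "SL2_quot m = \<lparr> carrier = {A. mat_red m A = A \<and> zl_red m (mat_det A) = zl_red m zl_one},
                  mult = (\<lambda>A B. mat_red m (mat_mul A B)),
                  one = mat_red m mat_id \<rparr>"

definition gen_mats :: "int \<Rightarrow> nat \<Rightarrow> mat2 set" where
  "gen_mats p n = (\<Union>i\<in>{0::nat, 1}.
     let t = (\<lambda>j. zl_smul (p ^ n) (zl_pow zl_lam j)) in
     { (zl_one, t i, zl_zero, zl_one),
       (zl_one, zl_zero, zl_neg (t i), zl_one),
       (zl_add zl_one (zl_neg (t (i + 1))), t (i + 2), zl_neg (t i), zl_add zl_one (t (i + 1))) })"

end

theory Submission
  imports Defs
begin

text \<open>Put q = p^n and m = p^(n+1), so that q^2 \<equiv> 0 (mod m). Each generator has the form I + qX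
  with X of trace zero, and modulo m one has (I + qX)(I + qY) = I + q(X + Y) + q^2 XY \<equiv> I + q(X + Y).
  Hence the group generated is the image of the additive group spanned by the six matrices X,
  which (using \<lambda>^2 = \<lambda> + 1) is the whole lattice of trace-zero matrices over \<int>[\<lambda>].
  Finally I + qX \<equiv> I + qY (mod m) iff X \<equiv> Y (mod p), so the group is in bijection with the
  trace-zero matrices over \<int>[\<lambda>]/p, i.e. with three entries of (\<int>/p)^2, giving p^6 elements.\<close>

lemma zl_red_mul_cong:
  assumes "zl_red m x = zl_red m x'" "zl_red m y = zl_red m y'"
  shows "zl_red m (zl_mul x y) = zl_red m (zl_mul x' y')"
  using assms by (cases x; cases x'; cases y; cases y') (auto intro!: mod_add_cong mod_mult_cong)

lemma zl_red_idem [simp]: "zl_red m (zl_red m x) = zl_red m x"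
  by (cases x) simp

lemma mat_red_idem [simp]: "mat_red m (mat_red m A) = mat_red m A"
  by (cases A) simp

lemma mat_red_mat_mul_left: "mat_red m (mat_mul (mat_red m A) B) = mat_red m (mat_mul A B)"
  by (cases A; cases B) (auto intro!: mod_add_cong mod_mult_cong)

lemma mat_red_mat_mul_right: "mat_red m (mat_mul A (mat_red m B)) = mat_red m (mat_mul A B)"
  by (cases A; cases B) (auto intro!: mod_add_cong mod_mult_cong)

lemma zl_red_mat_det: "zl_red m (mat_det (mat_red m A)) = zl_red m (mat_det A)"
  by (cases A) (auto intro!: mod_add_cong mod_mult_cong mod_diff_cong mod_minus_cong)

lemma mat_mul_assoc: "mat_mul (mat_mul A B) C = mat_mul A (mat_mul B C)"
  by (cases A; cases B; cases C) (auto simp: algebra_simps)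

lemma mat_mul_id_left [simp]: "mat_mul mat_id A = A"
  by (cases A) (auto simp: mat_id_def zl_one_def zl_zero_def)

lemma mat_det_mat_mul: "mat_det (mat_mul A B) = zl_mul (mat_det A) (mat_det B)"
  by (cases A; cases B) (auto simp: algebra_simps)

fun mat_adj :: "mat2 \<Rightarrow> mat2" where
  "mat_adj (a, b, c, d) = (d, zl_neg b, zl_neg c, a)"

lemma mat_mul_adj: "mat_mul (mat_adj A) A = (mat_det A, zl_zero, zl_zero, mat_det A)"
  by (cases A) (auto simp: zl_zero_def algebra_simps)

lemma mat_det_adj: "mat_det (mat_adj A) = mat_det A"
  by (cases A) (auto simp: algebra_simps)

lemma group_SL2_quot: "group (SL2_quot m)"
proof (rule groupI)
  have det_mul: "zl_red m (mat_det (mat_red m (mat_mul A B))) = zl_red m zl_one"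
    if "zl_red m (mat_det A) = zl_red m zl_one" "zl_red m (mat_det B) = zl_red m zl_one" for A B
  proof -
    have "zl_red m (mat_det (mat_red m (mat_mul A B))) = zl_red m (zl_mul (mat_det A) (mat_det B))"
      by (simp add: zl_red_mat_det mat_det_mat_mul)
    also have "\<dots> = zl_red m (zl_mul zl_one zl_one)"
      using that by (rule zl_red_mul_cong)
    finally show ?thesis by (simp add: zl_one_def)
  qed
  show "\<one>\<^bsub>SL2_quot m\<^esub> \<in> carrier (SL2_quot m)"
    using det_mul[of mat_id mat_id]
    by (simp add: SL2_quot_def mat_id_def zl_one_def zl_zero_def)
  show "x \<otimes>\<^bsub>SL2_quot m\<^esub> y \<in> carrier (SL2_quot m)"
    if "x \<in> carrier (SL2_quot m)" "y \<in> carrier (SL2_quot m)" for x y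
    using that det_mul by (simp add: SL2_quot_def)
  show "x \<otimes>\<^bsub>SL2_quot m\<^esub> y \<otimes>\<^bsub>SL2_quot m\<^esub> z
      = x \<otimes>\<^bsub>SL2_quot m\<^esub> (y \<otimes>\<^bsub>SL2_quot m\<^esub> z)" for x y z
    by (simp add: SL2_quot_def mat_red_mat_mul_left mat_red_mat_mul_right mat_mul_assoc)
  show "\<one>\<^bsub>SL2_quot m\<^esub> \<otimes>\<^bsub>SL2_quot m\<^esub> x = x" if "x \<in> carrier (SL2_quot m)" for x
    using that by (simp add: SL2_quot_def mat_red_mat_mul_left)
  show "\<exists>y\<in>carrier (SL2_quot m). y \<otimes>\<^bsub>SL2_quot m\<^esub> x = \<one>\<^bsub>SL2_quot m\<^esub>"
    if x: "x \<in> carrier (SL2_quot m)" for x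
  proof
    show "mat_red m (mat_adj x) \<in> carrier (SL2_quot m)"
      using x by (simp add: SL2_quot_def zl_red_mat_det mat_det_adj)
    show "mat_red m (mat_adj x) \<otimes>\<^bsub>SL2_quot m\<^esub> x = \<one>\<^bsub>SL2_quot m\<^esub>"
      using x by (cases "mat_det x")
        (simp add: SL2_quot_def mat_red_mat_mul_left mat_mul_adj mat_id_def zl_zero_def)
  qed
qed

fun mat_add :: "mat2 \<Rightarrow> mat2 \<Rightarrow> mat2" where
  "mat_add (a, b, c, d) (e, f, g, h) = (zl_add a e, zl_add b f, zl_add c g, zl_add d h)"

fun mat_smul :: "int \<Rightarrow> mat2 \<Rightarrow> mat2" where
  "mat_smul k (a, b, c, d) = (zl_smul k a, zl_smul k b, zl_smul k c, zl_smul k d)"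

definition sl2_mat :: "zl \<Rightarrow> zl \<Rightarrow> zl \<Rightarrow> mat2" where
  "sl2_mat a b c = (zl_neg a, b, c, a)"

text \<open>When q^2 \<equiv> 0 (mod m), X \<mapsto> I + qX turns addition into multiplication, like an exponential.\<close>
definition cong_exp :: "int \<Rightarrow> int \<Rightarrow> mat2 \<Rightarrow> mat2" where
  "cong_exp m q X = mat_red m (mat_add mat_id (mat_smul q X))"

definition cong_layer :: "int \<Rightarrow> int \<Rightarrow> mat2 set" where
  "cong_layer m q = (\<lambda>(a, b, c). cong_exp m q (sl2_mat a b c)) ` UNIV"

lemma cong_exp_sl2_in_layer [simp]: "cong_exp m q (sl2_mat a b c) \<in> cong_layer m q"
  unfolding cong_layer_def by (rule image_eqI[of _ _ "(a, b, c)"]) simp_all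

lemma cong_layerE:
  assumes "g \<in> cong_layer m q"
  obtains a b c where "g = cong_exp m q (sl2_mat a b c)"
  using assms by (auto simp: cong_layer_def)

lemma sl2_mat_add:
  "mat_add (sl2_mat a b c) (sl2_mat a' b' c') = sl2_mat (zl_add a a') (zl_add b b') (zl_add c c')"
  by (cases a; cases a') (simp add: sl2_mat_def)

lemma mat_smul_sl2_mat: "mat_smul k (sl2_mat a b c) = sl2_mat (zl_smul k a) (zl_smul k b) (zl_smul k c)"
  by (cases a) (simp add: sl2_mat_def)

lemma zl_smul_0 [simp]: "zl_smul 0 x = zl_zero"
  by (cases x) (simp add: zl_zero_def)

lemma cong_exp_zero: "cong_exp m q (mat_smul 0 X) = mat_red m mat_id"
  by (cases X) (simp add: cong_exp_def mat_id_def zl_one_def zl_zero_def)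

lemma mat_red_add_multiple: "mat_red m (mat_add A (mat_smul (m * r) B)) = mat_red m A"
  by (cases A; cases B) (auto simp: mod_simps mult.assoc)

lemma cong_exp_mult:
  assumes "q * q = m * r"
  shows "mat_red m (mat_mul (cong_exp m q X) (cong_exp m q Y)) = cong_exp m q (mat_add X Y)"
proof -
  have "mat_mul (mat_add mat_id (mat_smul q X)) (mat_add mat_id (mat_smul q Y))
      = mat_add (mat_add mat_id (mat_smul q (mat_add X Y))) (mat_smul (q * q) (mat_mul X Y))"
    by (cases X; cases Y) (auto simp: mat_id_def zl_one_def zl_zero_def algebra_simps)
  then show ?thesis
    unfolding cong_exp_def mat_red_mat_mul_left mat_red_mat_mul_right assms
    by (simp add: mat_red_add_multiple)
qed

lemma mat_det_cong_sl2:
  "mat_det (mat_add mat_id (mat_smul q (sl2_mat a b c)))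
     = zl_add zl_one (zl_smul (q * q) (mat_det (sl2_mat a b c)))"
  by (cases a; cases b; cases c) (auto simp: sl2_mat_def mat_id_def zl_one_def zl_zero_def algebra_simps)

lemma cong_exp_sl2_in_carrier:
  assumes "q * q = m * r"
  shows "cong_exp m q (sl2_mat a b c) \<in> carrier (SL2_quot m)"
proof -
  have "zl_red m (zl_add zl_one (zl_smul (m * r) D)) = zl_red m zl_one" for D
    by (cases D) (simp add: zl_one_def mult.assoc)
  then show ?thesis
    unfolding SL2_quot_def cong_exp_def using assms
    by (simp add: zl_red_mat_det mat_det_cong_sl2)
qed

lemma cong_exp_sl2_inv:
  assumes "q * q = m * r"
  shows "inv\<^bsub>SL2_quot m\<^esub> (cong_exp m q (sl2_mat a b c))
           = cong_exp m q (mat_smul (-1) (sl2_mat a b c))"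
proof (rule group.inv_equality[OF group_SL2_quot])
  have "mat_add (mat_smul (-1) (sl2_mat a b c)) (sl2_mat a b c) = mat_smul 0 (sl2_mat a b c)"
    by (cases a; cases b; cases c) (simp add: sl2_mat_def)
  then show "cong_exp m q (mat_smul (-1) (sl2_mat a b c)) \<otimes>\<^bsub>SL2_quot m\<^esub> cong_exp m q (sl2_mat a b c)
      = \<one>\<^bsub>SL2_quot m\<^esub>"
    by (simp add: SL2_quot_def cong_exp_mult[OF assms] cong_exp_zero)
qed (use cong_exp_sl2_in_carrier[OF assms] in \<open>simp_all add: mat_smul_sl2_mat\<close>)

lemma subgroup_cong_layer:
  assumes "q * q = m * r"
  shows "subgroup (cong_layer m q) (SL2_quot m)"
proof (rule group.subgroupI[OF group_SL2_quot])
  show "cong_layer m q \<subseteq> carrier (SL2_quot m)"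
    using cong_exp_sl2_in_carrier[OF assms] by (auto elim: cong_layerE)
  show "cong_layer m q \<noteq> {}"
    by (simp add: cong_layer_def)
  show "inv\<^bsub>SL2_quot m\<^esub> g \<in> cong_layer m q" if "g \<in> cong_layer m q" for g
    using that by (elim cong_layerE) (simp add: cong_exp_sl2_inv[OF assms] mat_smul_sl2_mat)
  show "g \<otimes>\<^bsub>SL2_quot m\<^esub> h \<in> cong_layer m q" if "g \<in> cong_layer m q" "h \<in> cong_layer m q" for g h
    using that by (elim cong_layerE) (simp add: SL2_quot_def cong_exp_mult[OF assms] sl2_mat_add)
qed

definition sl2_gens :: "mat2 set" where
  "sl2_gens = {sl2_mat (0, 0) (1, 0) (0, 0), sl2_mat (0, 0) (0, 0) (-1, 0), sl2_mat (0, 1) (1, 1) (-1, 0),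
               sl2_mat (0, 0) (0, 1) (0, 0), sl2_mat (0, 0) (0, 0) (0, -1), sl2_mat (1, 1) (1, 2) (0, -1)}"

lemma sl2_gens_multiples:
  assumes add: "\<And>X Y. P X \<Longrightarrow> P Y \<Longrightarrow> P (mat_add X Y)"
    and gen: "P X" "P (mat_smul (-1) X)" and "X \<in> sl2_gens"
  shows "P (mat_smul k X)"
proof -
  from \<open>X \<in> sl2_gens\<close> obtain a b c where X: "X = sl2_mat a b c"
    by (auto simp: sl2_gens_def)
  have succ: "mat_smul (k + 1) X = mat_add (mat_smul k X) X"
    and pred: "mat_smul (k - 1) X = mat_add (mat_smul k X) (mat_smul (-1) X)"
    and zero: "mat_smul 0 X = mat_add X (mat_smul (-1) X)" for k
    unfolding X by (cases a; cases b; cases c; simp add: sl2_mat_def algebra_simps)+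
  show ?thesis
  proof (induction k rule: int_induct[where k = 0])
    case base
    then show ?case using add gen zero by simp
  next
    case (step1 i)
    then show ?case using add gen succ by simp
  next
    case (step2 i)
    then show ?case using add gen pred by simp
  qed
qed

lemma sl2_mat_in_span:
  assumes add: "\<And>X Y. P X \<Longrightarrow> P Y \<Longrightarrow> P (mat_add X Y)"
    and gens: "\<And>X. X \<in> sl2_gens \<Longrightarrow> P X \<and> P (mat_smul (-1) X)"
  shows "P (sl2_mat a b c)"
proof -
  obtain a1 a2 b1 b2 c1 c2 where abc: "a = (a1, a2)" "b = (b1, b2)" "c = (c1, c2)"
    by (metis prod.exhaust)
  text \<open>The a-entries \<lambda> and \<lambda>^2 of the two mixed generators form a basis of \<int>[\<lambda>];
    the other four generators then adjust b and c.\<close>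
  have "sl2_mat a b c =
     mat_add (mat_smul a1 (sl2_mat (1, 1) (1, 2) (0, -1)))
      (mat_add (mat_smul (a2 - a1) (sl2_mat (0, 1) (1, 1) (-1, 0)))
       (mat_add (mat_smul (b1 - a2) (sl2_mat (0, 0) (1, 0) (0, 0)))
        (mat_add (mat_smul (b2 - a2 - a1) (sl2_mat (0, 0) (0, 1) (0, 0)))
         (mat_add (mat_smul (a1 - a2 - c1) (sl2_mat (0, 0) (0, 0) (-1, 0)))
          (mat_smul (- c2 - a1) (sl2_mat (0, 0) (0, 0) (0, -1)))))))"
    by (simp add: abc sl2_mat_def algebra_simps)
  also have "P \<dots>"
  proof -
    have multiple: "P (mat_smul k X)" if "X \<in> sl2_gens" for k X
      using sl2_gens_multiples[where P = P, OF add _ _ that] gens[OF that] by blast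
    show ?thesis
      by (intro add multiple) (simp_all add: sl2_gens_def)
  qed
  finally show ?thesis .
qed

lemma generate_cong_layer:
  assumes "q * q = m * r"
  shows "generate (SL2_quot m) (cong_exp m q ` sl2_gens) = cong_layer m q"
proof (rule group.generateI[OF group_SL2_quot, symmetric])
  show "subgroup (cong_layer m q) (SL2_quot m)"
    using assms by (rule subgroup_cong_layer)
  show "cong_exp m q ` sl2_gens \<subseteq> cong_layer m q"
    by (auto simp: sl2_gens_def)
  fix K
  assume K: "subgroup K (SL2_quot m)" "cong_exp m q ` sl2_gens \<subseteq> K"
  have "cong_exp m q (sl2_mat a b c) \<in> K" for a b c
  proof (rule sl2_mat_in_span[where P = "\<lambda>X. cong_exp m q X \<in> K"])
    show "cong_exp m q (mat_add X Y) \<in> K" if "cong_exp m q X \<in> K" "cong_exp m q Y \<in> K" for X Y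
      using subgroup.m_closed[OF K(1) that] by (simp add: SL2_quot_def cong_exp_mult[OF assms])
    show "cong_exp m q X \<in> K \<and> cong_exp m q (mat_smul (-1) X) \<in> K" if "X \<in> sl2_gens" for X
    proof -
      from that obtain a b c where X: "X = sl2_mat a b c"
        by (auto simp: sl2_gens_def)
      have "cong_exp m q X \<in> K"
        using K(2) that by blast
      moreover from subgroup.m_inv_closed[OF K(1) this]
      have "cong_exp m q (mat_smul (-1) X) \<in> K"
        by (simp add: X cong_exp_sl2_inv[OF assms])
      ultimately show ?thesis ..
    qed
  qed
  then show "cong_layer m q \<subseteq> K"
    by (auto elim: cong_layerE)
qed

lemma mod_add_mult_cancel_iff:
  fixes c q p x y :: int
  assumes "q \<noteq> 0"
  shows "(c + q * x) mod (q * p) = (c + q * y) mod (q * p) \<longleftrightarrow> x mod p = y mod p"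
proof -
  have "(c + q * x) mod (q * p) = (c + q * y) mod (q * p) \<longleftrightarrow> q * p dvd q * (x - y)"
    by (simp add: mod_eq_dvd_iff algebra_simps)
  also have "\<dots> \<longleftrightarrow> p dvd x - y"
    using assms by simp
  also have "\<dots> \<longleftrightarrow> x mod p = y mod p"
    by (simp add: mod_eq_dvd_iff)
  finally show ?thesis .
qed

lemma cong_exp_eq_iff:
  assumes "m = q * p" "q \<noteq> 0"
  shows "cong_exp m q X = cong_exp m q Y \<longleftrightarrow> mat_red p X = mat_red p Y"
proof -
  have entry_eq_iff: "zl_red m (zl_add e (zl_smul q x)) = zl_red m (zl_add e (zl_smul q y))
      \<longleftrightarrow> zl_red p x = zl_red p y" for e x y
    by (cases e; cases x; cases y) (simp add: assms mod_add_mult_cancel_iff)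
  show ?thesis
    by (cases X rule: prod_cases4; cases Y rule: prod_cases4) (simp add: cong_exp_def mat_id_def entry_eq_iff)
qed

lemma mat_red_sl2_mat_eq_iff:
  "mat_red p (sl2_mat a b c) = mat_red p (sl2_mat a' b' c') \<longleftrightarrow>
     (zl_red p a, zl_red p b, zl_red p c) = (zl_red p a', zl_red p b', zl_red p c')"
  by (cases a; cases a') (auto simp: sl2_mat_def intro: mod_minus_cong)

lemma card_cong_layer:
  assumes "m = q * int p" "q \<noteq> 0" "p > 0"
  shows "card (cong_layer m q) = p ^ 6"
proof -
  define R where "R = {0..<int p} \<times> {0..<int p}"
  define f where "f = (\<lambda>(a, b, c). cong_exp m q (sl2_mat a b c))"
  have red_R: "zl_red (int p) a \<in> R" for a
    using assms(3) by (cases a) (simp add: R_def)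
  have red_id: "zl_red (int p) a = a" if "a \<in> R" for a
    using that by (cases a) (simp add: R_def)
  have f_eq_iff: "f (a, b, c) = f (a', b', c') \<longleftrightarrow>
      (zl_red (int p) a, zl_red (int p) b, zl_red (int p) c)
        = (zl_red (int p) a', zl_red (int p) b', zl_red (int p) c')" for a b c a' b' c'
    unfolding f_def by (simp add: cong_exp_eq_iff[OF assms(1,2)] mat_red_sl2_mat_eq_iff)
  have "cong_layer m q = f ` (R \<times> R \<times> R)"
  proof
    show "cong_layer m q \<subseteq> f ` (R \<times> R \<times> R)"
    proof
      fix g
      assume "g \<in> cong_layer m q"
      then obtain a b c where "g = f (a, b, c)"
        by (auto simp: f_def elim: cong_layerE)
      then have "g = f (zl_red (int p) a, zl_red (int p) b, zl_red (int p) c)"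
        by (simp only: f_eq_iff zl_red_idem)
      with red_R show "g \<in> f ` (R \<times> R \<times> R)"
        by blast
    qed
    show "f ` (R \<times> R \<times> R) \<subseteq> cong_layer m q"
      by (auto simp: f_def)
  qed
  moreover have "inj_on f (R \<times> R \<times> R)"
  proof (rule inj_onI)
    fix x y
    assume "x \<in> R \<times> R \<times> R" "y \<in> R \<times> R \<times> R" "f x = f y"
    then show "x = y"
      using f_eq_iff red_id by (cases x; cases y) (metis mem_Times_iff prod.inject fst_conv snd_conv)
  qed
  moreover have "card R = p * p"
    by (simp add: R_def card_cartesian_product)
  ultimately show ?thesis
    by (simp add: card_image card_cartesian_product eval_nat_numeral)
qed

lemma mat_red_gen_mats: "mat_red m ` gen_mats p n = cong_exp m (p ^ n) ` sl2_gens"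
  by (simp add: gen_mats_def cong_exp_def sl2_gens_def sl2_mat_def mat_id_def zl_one_def
      zl_zero_def zl_lam_def eval_nat_numeral insert_commute)

theorem lemmaA:
  fixes p n :: nat
  assumes "prime p" and "n > 0"
  shows "card (generate (SL2_quot (int p ^ (n + 1)))
                 (mat_red (int p ^ (n + 1)) ` gen_mats (int p) n)) = p ^ 6"
proof -
  have "int p ^ n * int p ^ n = int p ^ (n + 1) * int p ^ (n - 1)"
    using assms(2) by (simp flip: power_add power_Suc)
  then have "generate (SL2_quot (int p ^ (n + 1))) (mat_red (int p ^ (n + 1)) ` gen_mats (int p) n)
      = cong_layer (int p ^ (n + 1)) (int p ^ n)"
    unfolding mat_red_gen_mats by (rule generate_cong_layer)
  moreover have "card (cong_layer (int p ^ (n + 1)) (int p ^ n)) = p ^ 6"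
    using prime_gt_0_nat[OF assms(1)] by (intro card_cong_layer) simp_all
  ultimately show ?thesis
    by simp
qed

end
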